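(* Let $(W,S)$ be a Coxeter system with $S$ finite and $\phi:\operatorname{Ad}(Q_W)\to W$ the homomorphism $e_x\mapsto x$. Then $\phi$ restricts to an isomorphism $[\operatorname{Ad}(Q_W),\operatorname{Ad}(Q_W)]\xrightarrow{\cong}[W,W]$ of commutator subgroups.
   Context: A Coxeter system $(W,S)$: $S$ finite, $m:S\times S\to\mathbb{N}\cup\{\infty\}$ with $m(s,s)=1$, $2\le m(s,t)=m(t,s)\le\infty$ for $s\ne t$, $W=\langle s\in S\mid (st)^{m(s,t)}=1\ (m(s,t)<\infty)\rangle$. The Coxeter quandle $Q_W=\bigcup_{w\in W}w^{-1}Sw$ has operation $x\ast y=yxy$, and $\operatorname{Ad}(Q_W)=\langle e_x\ (x\in Q_W)\mid e_y^{-1}e_xe_y=e_{x\ast y}\ (x,y\in Q_W)\rangle$. *)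

theory Defs
  imports "HOL-Algebra.Algebra" "HOL-Library.Extended_Nat"
begin

text \<open>A word over a generating set: a list of letters (x, True) = x and (x, False) = x^-1.\<close>
type_synonym 'g word = "('g \<times> bool) list"

inductive pres_rel :: "'g set \<Rightarrow> 'g word set \<Rightarrow> 'g word \<Rightarrow> 'g word \<Rightarrow> bool"
  for Xg :: "'g set" and Rl :: "'g word set" where
  pr_refl: "pres_rel Xg Rl w w"
| pr_sym: "pres_rel Xg Rl v w \<Longrightarrow> pres_rel Xg Rl w v"
| pr_trans: "pres_rel Xg Rl u v \<Longrightarrow> pres_rel Xg Rl v w \<Longrightarrow> pres_rel Xg Rl u w"
| pr_cancel: "x \<in> Xg \<Longrightarrow> pres_rel Xg Rl (u @ [(x, b), (x, \<not> b)] @ v) (u @ v)"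
| pr_rel: "r \<in> Rl \<Longrightarrow> pres_rel Xg Rl (u @ r @ v) (u @ v)"

definition pres_class :: "'g set \<Rightarrow> 'g word set \<Rightarrow> 'g word \<Rightarrow> 'g word set" where
  "pres_class Xg Rl w = {v. v \<in> lists (Xg \<times> UNIV) \<and> pres_rel Xg Rl w v}"

definition presented_group :: "'g set \<Rightarrow> 'g word set \<Rightarrow> 'g word set monoid" where
  "presented_group Xg Rl =
     \<lparr> carrier = pres_class Xg Rl ` lists (Xg \<times> UNIV),
       monoid.mult = (\<lambda>A B. pres_class Xg Rl ((SOME a. a \<in> A) @ (SOME b. b \<in> B))),
       monoid.one = pres_class Xg Rl [] \<rparr>"

definition pres_gen :: "'g set \<Rightarrow> 'g word set \<Rightarrow> 'g \<Rightarrow> 'g word set" where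
  "pres_gen Xg Rl x = pres_class Xg Rl [(x, True)]"

definition eval_word :: "('a, 'b) monoid_scheme \<Rightarrow> ('g \<Rightarrow> 'a) \<Rightarrow> 'g word \<Rightarrow> 'a" where
  "eval_word G f w =
     foldr (\<lambda>(x, b) acc. (if b then f x else inv\<^bsub>G\<^esub> (f x)) \<otimes>\<^bsub>G\<^esub> acc) w \<one>\<^bsub>G\<^esub>"

definition coxeter_matrix :: "'s set \<Rightarrow> ('s \<Rightarrow> 's \<Rightarrow> enat) \<Rightarrow> bool" where
  "coxeter_matrix S m \<longleftrightarrow> finite S \<and>
     (\<forall>s\<in>S. m s s = 1) \<and>
     (\<forall>s\<in>S. \<forall>t\<in>S. s \<noteq> t \<longrightarrow> 2 \<le> m s t \<and> m s t = m t s)"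

definition coxeter_rels :: "'s set \<Rightarrow> ('s \<Rightarrow> 's \<Rightarrow> enat) \<Rightarrow> 's word set" where
  "coxeter_rels S m = {concat (replicate k [(s, True), (t, True)]) | s t k.
      s \<in> S \<and> t \<in> S \<and> m s t = enat k}"

definition coxeter_group :: "'s set \<Rightarrow> ('s \<Rightarrow> 's \<Rightarrow> enat) \<Rightarrow> 's word set monoid" where
  "coxeter_group S m = presented_group S (coxeter_rels S m)"

definition coxeter_quandle :: "'s set \<Rightarrow> ('s \<Rightarrow> 's \<Rightarrow> enat) \<Rightarrow> 's word set set" where
  "coxeter_quandle S m =
     {inv\<^bsub>coxeter_group S m\<^esub> w \<otimes>\<^bsub>coxeter_group S m\<^esub>
        pres_gen S (coxeter_rels S m) s \<otimes>\<^bsub>coxeter_group S m\<^esub> w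
      | w s. w \<in> carrier (coxeter_group S m) \<and> s \<in> S}"

definition quandle_op :: "'s set \<Rightarrow> ('s \<Rightarrow> 's \<Rightarrow> enat) \<Rightarrow> 's word set \<Rightarrow> 's word set \<Rightarrow> 's word set" where
  "quandle_op S m x y = y \<otimes>\<^bsub>coxeter_group S m\<^esub> x \<otimes>\<^bsub>coxeter_group S m\<^esub> y"

definition adjoint_rels :: "'s set \<Rightarrow> ('s \<Rightarrow> 's \<Rightarrow> enat) \<Rightarrow> 's word set word set" where
  "adjoint_rels S m = {[(y, False), (x, True), (y, True), (quandle_op S m x y, False)] | x y.
      x \<in> coxeter_quandle S m \<and> y \<in> coxeter_quandle S m}"

definition adjoint_group :: "'s set \<Rightarrow> ('s \<Rightarrow> 's \<Rightarrow> enat) \<Rightarrow> 's word set word set monoid" where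
  "adjoint_group S m = presented_group (coxeter_quandle S m) (adjoint_rels S m)"

definition adjoint_phi :: "'s set \<Rightarrow> ('s \<Rightarrow> 's \<Rightarrow> enat) \<Rightarrow> 's word set word set \<Rightarrow> 's word set" where
  "adjoint_phi S m A = eval_word (coxeter_group S m) (\<lambda>x. x) (SOME w. w \<in> A)"

end

theory Submission
  imports Defs
begin

text \<open>
  The map \<phi> is onto, and the conjugation formula
  \<open>g\<inverse> e\<^sub>y g = e\<^bsub>\<phi>(g)\<inverse> y \<phi>(g)\<^esub>\<close> shows that \<open>ker \<phi>\<close> is central.  The squares
  \<open>e\<^sub>x\<^sup>2\<close> are central and depend only on the conjugacy class of \<open>x\<close>; they generate a
  normal subgroup \<open>N\<close>.  In \<open>Ad(Q\<^sub>W)/N\<close> the images of the \<open>e\<^sub>x\<close> are involutions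
  satisfying the quandle relations, and a computation in the dihedral subgroups shows that the
  images of the \<open>e\<^sub>s\<close> (\<open>s \<in> S\<close>) then satisfy the Coxeter relations.  Hence the projection
  onto \<open>Ad(Q\<^sub>W)/N\<close> factors through \<phi>, i.e. \<open>ker \<phi> \<subseteq> N\<close>.  Finally, for each of the
  finitely many conjugacy classes \<open>C\<close> of \<open>Q\<^sub>W\<close>, counting the letters \<open>e\<^sub>x\<^sup>\<plusminus>\<^sup>1\<close> with \<open>x \<in> C\<close>
  is a homomorphism to \<open>\<int>\<close> that kills commutators and sends \<open>e\<^sub>x\<^sup>2\<close> to \<open>2 \<delta>\<^sub>C\<close>; so the only
  element of \<open>N\<close> in the commutator subgroup is \<open>1\<close>.
\<close>

section \<open>Presented groups\<close>

lemma pres_rel_append_left: "pres_rel Xg Rl u u' \<Longrightarrow> pres_rel Xg Rl (v @ u) (v @ u')"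
proof (induction rule: pres_rel.induct)
  case (pr_cancel x u1 b w)
  then show ?case by (metis append_assoc pres_rel.pr_cancel)
next
  case (pr_rel r u1 w)
  then show ?case by (metis append_assoc pres_rel.pr_rel)
qed (auto intro: pres_rel.intros)

lemma pres_rel_append_right: "pres_rel Xg Rl u u' \<Longrightarrow> pres_rel Xg Rl (u @ v) (u' @ v)"
proof (induction rule: pres_rel.induct)
  case (pr_cancel x u1 b w)
  then show ?case by (metis append_assoc pres_rel.pr_cancel)
next
  case (pr_rel r u1 w)
  then show ?case by (metis append_assoc pres_rel.pr_rel)
qed (auto intro: pres_rel.intros)

lemma pres_rel_append:
  "pres_rel Xg Rl u u' \<Longrightarrow> pres_rel Xg Rl v v' \<Longrightarrow> pres_rel Xg Rl (u @ v) (u' @ v')"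
  by (meson pres_rel.pr_trans pres_rel_append_left pres_rel_append_right)

definition inv_word :: "'g word \<Rightarrow> 'g word" where
  "inv_word w = rev (map (\<lambda>(x, b). (x, \<not> b)) w)"

lemma inv_word_Nil [simp]: "inv_word [] = []"
  by (simp add: inv_word_def)

lemma inv_word_Cons [simp]: "inv_word ((x, b) # w) = inv_word w @ [(x, \<not> b)]"
  by (simp add: inv_word_def)

lemma inv_word_in_lists: "w \<in> lists (Xg \<times> UNIV) \<Longrightarrow> inv_word w \<in> lists (Xg \<times> UNIV)"
  by (auto simp: inv_word_def)

lemma pres_rel_inv_word_append: "w \<in> lists (Xg \<times> UNIV) \<Longrightarrow> pres_rel Xg Rl (inv_word w @ w) []"
proof (induction w)
  case Nil
  then show ?case by (simp add: pres_rel.pr_refl)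
next
  case (Cons a w)
  obtain x b where a: "a = (x, b)" by fastforce
  have "pres_rel Xg Rl (inv_word w @ [(x, \<not> b), (x, b)] @ w) (inv_word w @ w)"
    using Cons.prems a pres_rel.pr_cancel[where x = x and b = "\<not> b"] by auto
  then show ?case
    using Cons a by (auto intro: pres_rel.pr_trans)
qed

lemma pres_class_eqI: "pres_rel Xg Rl w v \<Longrightarrow> pres_class Xg Rl w = pres_class Xg Rl v"
  unfolding pres_class_def by (meson pres_rel.pr_sym pres_rel.pr_trans)

lemma pres_class_self: "w \<in> lists (Xg \<times> UNIV) \<Longrightarrow> w \<in> pres_class Xg Rl w"
  unfolding pres_class_def by (simp add: pres_rel.pr_refl)

lemma some_in_pres_class:
  assumes "w \<in> lists (Xg \<times> UNIV)"
  shows "(SOME v. v \<in> pres_class Xg Rl w) \<in> lists (Xg \<times> UNIV)"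
    and "pres_rel Xg Rl w (SOME v. v \<in> pres_class Xg Rl w)"
proof -
  have "(SOME v. v \<in> pres_class Xg Rl w) \<in> pres_class Xg Rl w"
    using pres_class_self[OF assms] by (rule someI)
  then show "(SOME v. v \<in> pres_class Xg Rl w) \<in> lists (Xg \<times> UNIV)"
    and "pres_rel Xg Rl w (SOME v. v \<in> pres_class Xg Rl w)"
    unfolding pres_class_def by auto
qed

lemma presented_group_carrier:
  "carrier (presented_group Xg Rl) = pres_class Xg Rl ` lists (Xg \<times> UNIV)"
  by (simp add: presented_group_def)

lemma presented_group_one: "\<one>\<^bsub>presented_group Xg Rl\<^esub> = pres_class Xg Rl []"
  by (simp add: presented_group_def)

lemma presented_group_mult:
  assumes "u \<in> lists (Xg \<times> UNIV)" "v \<in> lists (Xg \<times> UNIV)"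
  shows "pres_class Xg Rl u \<otimes>\<^bsub>presented_group Xg Rl\<^esub> pres_class Xg Rl v = pres_class Xg Rl (u @ v)"
proof -
  have "pres_rel Xg Rl (u @ v) ((SOME a. a \<in> pres_class Xg Rl u) @ (SOME b. b \<in> pres_class Xg Rl v))"
    using some_in_pres_class(2) assms by (intro pres_rel_append)
  then show ?thesis
    unfolding presented_group_def by (simp add: pres_class_eqI)
qed

lemma group_presented_group: "group (presented_group Xg Rl)"
proof (rule groupI)
  fix x y z
  assume "x \<in> carrier (presented_group Xg Rl)" "y \<in> carrier (presented_group Xg Rl)"
    "z \<in> carrier (presented_group Xg Rl)"
  then obtain u v w where "u \<in> lists (Xg \<times> UNIV)" "v \<in> lists (Xg \<times> UNIV)"
    "w \<in> lists (Xg \<times> UNIV)" "x = pres_class Xg Rl u" "y = pres_class Xg Rl v"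
    "z = pres_class Xg Rl w"
    unfolding presented_group_carrier by blast
  then show "x \<otimes>\<^bsub>presented_group Xg Rl\<^esub> y \<in> carrier (presented_group Xg Rl)"
    and "x \<otimes>\<^bsub>presented_group Xg Rl\<^esub> y \<otimes>\<^bsub>presented_group Xg Rl\<^esub> z =
      x \<otimes>\<^bsub>presented_group Xg Rl\<^esub> (y \<otimes>\<^bsub>presented_group Xg Rl\<^esub> z)"
    by (simp_all add: presented_group_carrier presented_group_mult)
next
  fix x
  assume "x \<in> carrier (presented_group Xg Rl)"
  then obtain u where u: "u \<in> lists (Xg \<times> UNIV)" "x = pres_class Xg Rl u"
    unfolding presented_group_carrier by blast
  then show "\<one>\<^bsub>presented_group Xg Rl\<^esub> \<otimes>\<^bsub>presented_group Xg Rl\<^esub> x = x"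
    using presented_group_mult[of "[]"] by (simp add: presented_group_one)
  have "pres_class Xg Rl (inv_word u) \<otimes>\<^bsub>presented_group Xg Rl\<^esub> x = \<one>\<^bsub>presented_group Xg Rl\<^esub>"
    using u inv_word_in_lists presented_group_mult pres_rel_inv_word_append
    by (metis pres_class_eqI presented_group_one)
  then show "\<exists>y\<in>carrier (presented_group Xg Rl). y \<otimes>\<^bsub>presented_group Xg Rl\<^esub> x = \<one>\<^bsub>presented_group Xg Rl\<^esub>"
    using inv_word_in_lists[OF u(1)] unfolding presented_group_carrier by blast
qed (auto simp: presented_group_carrier presented_group_one)

lemma presented_group_inv:
  assumes "u \<in> lists (Xg \<times> UNIV)"
  shows "inv\<^bsub>presented_group Xg Rl\<^esub> (pres_class Xg Rl u) = pres_class Xg Rl (inv_word u)"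
proof -
  interpret group "presented_group Xg Rl" by (rule group_presented_group)
  have "pres_class Xg Rl (inv_word u) \<otimes>\<^bsub>presented_group Xg Rl\<^esub> pres_class Xg Rl u
      = \<one>\<^bsub>presented_group Xg Rl\<^esub>"
    using assms inv_word_in_lists presented_group_mult pres_rel_inv_word_append
    by (metis pres_class_eqI presented_group_one)
  moreover have "pres_class Xg Rl u \<in> carrier (presented_group Xg Rl)"
    "pres_class Xg Rl (inv_word u) \<in> carrier (presented_group Xg Rl)"
    using assms inv_word_in_lists by (auto simp: presented_group_carrier)
  ultimately show ?thesis
    by (rule inv_equality)
qed

lemma pres_gen_closed: "x \<in> Xg \<Longrightarrow> pres_gen Xg Rl x \<in> carrier (presented_group Xg Rl)"
  by (auto simp: presented_group_carrier pres_gen_def)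

lemma pres_class_Cons:
  assumes "(x, b) # w \<in> lists (Xg \<times> UNIV)"
  shows "pres_class Xg Rl ((x, b) # w) =
    (if b then pres_gen Xg Rl x else inv\<^bsub>presented_group Xg Rl\<^esub> (pres_gen Xg Rl x))
      \<otimes>\<^bsub>presented_group Xg Rl\<^esub> pres_class Xg Rl w"
  using assms presented_group_mult[of "[(x, b)]" Xg w Rl] presented_group_inv[of "[(x, True)]" Xg Rl]
  by (auto simp: pres_gen_def)

lemma pres_class_eq_eval_word:
  "w \<in> lists (Xg \<times> UNIV) \<Longrightarrow>
    pres_class Xg Rl w = eval_word (presented_group Xg Rl) (pres_gen Xg Rl) w"
proof (induction w)
  case Nil
  then show ?case by (simp add: eval_word_def presented_group_one)
next
  case (Cons a w)
  then show ?case by (cases a) (simp add: pres_class_Cons eval_word_def)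
qed

lemma presented_group_induct [consumes 1, case_names one gen]:
  assumes "g \<in> carrier (presented_group Xg Rl)"
    and "P \<one>\<^bsub>presented_group Xg Rl\<^esub>"
    and "\<And>x a h. x \<in> Xg \<Longrightarrow>
      a \<in> {pres_gen Xg Rl x, inv\<^bsub>presented_group Xg Rl\<^esub> (pres_gen Xg Rl x)} \<Longrightarrow>
      h \<in> carrier (presented_group Xg Rl) \<Longrightarrow> P h \<Longrightarrow> P (a \<otimes>\<^bsub>presented_group Xg Rl\<^esub> h)"
  shows "P g"
proof -
  obtain w where w: "w \<in> lists (Xg \<times> UNIV)" "g = pres_class Xg Rl w"
    using assms(1) by (auto simp: presented_group_carrier)
  have "P (pres_class Xg Rl w)" using w(1)
  proof (induction w)
    case Nil
    then show ?case using assms(2) by (simp add: presented_group_one)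
  next
    case (Cons a w)
    then show ?case
      using assms(3) by (cases a) (auto simp: pres_class_Cons presented_group_carrier)
  qed
  then show ?thesis using w by simp
qed

lemma pres_class_relator:
  "r \<in> Rl \<Longrightarrow> pres_class Xg Rl r = \<one>\<^bsub>presented_group Xg Rl\<^esub>"
  using pres_rel.pr_rel[of r Rl Xg "[]" "[]"] by (simp add: presented_group_one pres_class_eqI)

lemma eval_word_Nil [simp]: "eval_word G f [] = \<one>\<^bsub>G\<^esub>"
  by (simp add: eval_word_def)

lemma eval_word_Cons [simp]:
  "eval_word G f ((x, b) # w) = (if b then f x else inv\<^bsub>G\<^esub> (f x)) \<otimes>\<^bsub>G\<^esub> eval_word G f w"
  by (simp add: eval_word_def)

lemma eval_word_cong:
  "w \<in> lists (Y \<times> UNIV) \<Longrightarrow> (\<And>x. x \<in> Y \<Longrightarrow> f x = g x) \<Longrightarrow> eval_word G f w = eval_word G g w"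
proof (induction w)
  case (Cons a w)
  then show ?case by (cases a) auto
qed simp

lemma (in group) eval_word_closed:
  "w \<in> lists (Y \<times> UNIV) \<Longrightarrow> f ` Y \<subseteq> carrier G \<Longrightarrow> eval_word G f w \<in> carrier G"
proof (induction w)
  case (Cons a w)
  then show ?case by (cases a) auto
qed simp

lemma (in group) eval_word_append:
  assumes "u \<in> lists (Y \<times> UNIV)" "v \<in> lists (Y \<times> UNIV)" "f ` Y \<subseteq> carrier G"
  shows "eval_word G f (u @ v) = eval_word G f u \<otimes> eval_word G f v"
  using assms(1)
proof (induction u)
  case (Cons a u)
  obtain x b where a: "a = (x, b)" by fastforce
  then have "f x \<in> carrier G" "eval_word G f u \<in> carrier G" "eval_word G f v \<in> carrier G"
    using Cons assms eval_word_closed by auto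
  with Cons a show ?case by (simp add: m_assoc)
qed (simp add: eval_word_closed[OF assms(2,3)])

lemma (in group) eval_word_concat_replicate:
  assumes "f s \<in> carrier G" "f t \<in> carrier G"
  shows "eval_word G f (concat (replicate k [(s, True), (t, True)])) = (f s \<otimes> f t) [^] k"
proof (induction k)
  case (Suc k)
  have "(f s \<otimes> f t) [^] Suc k = f s \<otimes> f t \<otimes> (f s \<otimes> f t) [^] k"
    using assms by (intro nat_pow_Suc2) simp
  then show ?case
    using Suc assms by (simp add: m_assoc)
qed simp

lemma (in group_hom) hom_eval_word:
  "w \<in> lists (Y \<times> UNIV) \<Longrightarrow> f ` Y \<subseteq> carrier G \<Longrightarrow> h (eval_word G f w) = eval_word H (h \<circ> f) w"
proof (induction w)
  case (Cons a w)
  obtain x b where a: "a = (x, b)" by fastforce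
  then have "f x \<in> carrier G" "eval_word G f w \<in> carrier G"
    using Cons G.eval_word_closed by auto
  with Cons a show ?case by simp
qed simp

lemma (in group) eval_word_pres_rel:
  assumes "f ` UNIV \<subseteq> carrier G" "\<And>r. r \<in> Rl \<Longrightarrow> eval_word G f r = \<one>"
    and "pres_rel Xg Rl v w"
  shows "eval_word G f v = eval_word G f w"
  using assms(3)
proof (induction rule: pres_rel.induct)
  case (pr_cancel x u b v)
  have "f x \<in> carrier G" "eval_word G f v \<in> carrier G"
    using assms(1) eval_word_closed[of v UNIV f] by auto
  then have "eval_word G f ([(x, b), (x, \<not> b)] @ v) = eval_word G f v"
    by (simp add: m_assoc[symmetric])
  then show ?case
    using assms(1) by (simp add: eval_word_append[of _ UNIV] del: append_Cons)
next
  case (pr_rel r u v)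
  then show ?case
    using assms eval_word_closed[of _ UNIV f] by (simp add: eval_word_append[of _ UNIV])
qed simp_all

definition pres_lift :: "('a, 'b) monoid_scheme \<Rightarrow> ('g \<Rightarrow> 'a) \<Rightarrow> 'g word set \<Rightarrow> 'a" where
  "pres_lift G f A = eval_word G f (SOME w. w \<in> A)"

lemma (in group) pres_lift_pres_class:
  assumes "f ` Xg \<subseteq> carrier G" "Rl \<subseteq> lists (Xg \<times> UNIV)"
    and "\<And>r. r \<in> Rl \<Longrightarrow> eval_word G f r = \<one>" and "w \<in> lists (Xg \<times> UNIV)"
  shows "pres_lift G f (pres_class Xg Rl w) = eval_word G f w"
proof -
  \<comment> \<open>\<open>pres_rel\<close> does not keep intermediate words inside \<open>Xg\<close>, so \<open>f\<close> is extended by \<open>\<one>\<close>.\<close>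
  define f' where "f' x = (if x \<in> Xg then f x else \<one>)" for x
  let ?v = "SOME v. v \<in> pres_class Xg Rl w"
  have v: "?v \<in> lists (Xg \<times> UNIV)" "pres_rel Xg Rl w ?v"
    using some_in_pres_class[OF assms(4)] by auto
  have f'_eq: "eval_word G f' u = eval_word G f u" if "u \<in> lists (Xg \<times> UNIV)" for u
    using that by (rule eval_word_cong) (simp add: f'_def)
  have "eval_word G f' w = eval_word G f' ?v"
  proof (rule eval_word_pres_rel[OF _ _ v(2)])
    show "f' ` UNIV \<subseteq> carrier G" using assms(1) by (auto simp: f'_def)
    show "eval_word G f' r = \<one>" if "r \<in> Rl" for r
      using that assms(2,3) f'_eq by (metis subsetD)
  qed
  then show ?thesis
    using f'_eq assms(4) v(1) by (simp add: pres_lift_def)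
qed

lemma (in group) pres_lift_pres_gen:
  assumes "f ` Xg \<subseteq> carrier G" "Rl \<subseteq> lists (Xg \<times> UNIV)"
    and "\<And>r. r \<in> Rl \<Longrightarrow> eval_word G f r = \<one>" and "x \<in> Xg"
  shows "pres_lift G f (pres_gen Xg Rl x) = f x"
  using pres_lift_pres_class[OF assms(1-3), of "[(x, True)]"] assms(1,4)
  by (auto simp: pres_gen_def)

lemma (in group) pres_lift_hom:
  assumes "f ` Xg \<subseteq> carrier G" "Rl \<subseteq> lists (Xg \<times> UNIV)"
    and "\<And>r. r \<in> Rl \<Longrightarrow> eval_word G f r = \<one>"
  shows "pres_lift G f \<in> hom (presented_group Xg Rl) G"
proof (rule homI)
  fix x y
  assume "x \<in> carrier (presented_group Xg Rl)" "y \<in> carrier (presented_group Xg Rl)"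
  then obtain u v where "u \<in> lists (Xg \<times> UNIV)" "v \<in> lists (Xg \<times> UNIV)"
    "x = pres_class Xg Rl u" "y = pres_class Xg Rl v"
    unfolding presented_group_carrier by blast
  then show "pres_lift G f x \<in> carrier G"
    and "pres_lift G f (x \<otimes>\<^bsub>presented_group Xg Rl\<^esub> y) = pres_lift G f x \<otimes> pres_lift G f y"
    using assms by (simp_all add: pres_lift_pres_class presented_group_mult eval_word_closed
        eval_word_append)
qed

lemma (in group) presented_group_hom_eqI:
  assumes "h \<in> hom (presented_group Xg Rl) G" "h' \<in> hom (presented_group Xg Rl) G"
    and "\<And>x. x \<in> Xg \<Longrightarrow> h (pres_gen Xg Rl x) = h' (pres_gen Xg Rl x)"
    and "g \<in> carrier (presented_group Xg Rl)"
  shows "h g = h' g"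
proof -
  interpret h: group_hom "presented_group Xg Rl" G h
    unfolding group_hom_def group_hom_axioms_def using assms(1) group_presented_group is_group by blast
  interpret h': group_hom "presented_group Xg Rl" G h'
    unfolding group_hom_def group_hom_axioms_def using assms(2) group_presented_group is_group by blast
  show ?thesis
    using assms(4)
  proof (induction rule: presented_group_induct)
    case (gen x a k)
    from gen(1) have "pres_gen Xg Rl x \<in> carrier (presented_group Xg Rl)"
      by (rule pres_gen_closed)
    with gen show ?case
      using assms(3) by (auto simp: h.hom_mult h'.hom_mult)
  qed simp
qed

definition central :: "('a, 'b) monoid_scheme \<Rightarrow> 'a \<Rightarrow> bool" where
  "central G z \<longleftrightarrow> z \<in> carrier G \<and> (\<forall>h\<in>carrier G. z \<otimes>\<^bsub>G\<^esub> h = h \<otimes>\<^bsub>G\<^esub> z)"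

context group
begin

lemma inv_cancel_left [simp]:
  "x \<in> carrier G \<Longrightarrow> y \<in> carrier G \<Longrightarrow> x \<otimes> (inv x \<otimes> y) = y"
  "x \<in> carrier G \<Longrightarrow> y \<in> carrier G \<Longrightarrow> inv x \<otimes> (x \<otimes> y) = y"
  by (simp_all add: m_assoc[symmetric])

lemma conj_hom: "g \<in> carrier G \<Longrightarrow> (\<lambda>h. inv g \<otimes> h \<otimes> g) \<in> hom G G"
  by (rule homI) (simp_all add: m_assoc)

lemma conj_eq_iff_commute:
  "g \<in> carrier G \<Longrightarrow> h \<in> carrier G \<Longrightarrow> inv h \<otimes> g \<otimes> h = g \<longleftrightarrow> g \<otimes> h = h \<otimes> g"
  by (simp add: m_assoc inv_solve_left')

lemma centralI: "z \<in> carrier G \<Longrightarrow> (\<And>h. h \<in> carrier G \<Longrightarrow> z \<otimes> h = h \<otimes> z) \<Longrightarrow> central G z"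
  by (simp add: central_def)

lemma central_closed: "central G z \<Longrightarrow> z \<in> carrier G"
  by (simp add: central_def)

lemma central_commute: "central G z \<Longrightarrow> h \<in> carrier G \<Longrightarrow> z \<otimes> h = h \<otimes> z"
  by (simp add: central_def)

lemma central_mult: "central G a \<Longrightarrow> central G b \<Longrightarrow> central G (a \<otimes> b)"
  unfolding central_def by (metis m_assoc m_closed)

lemma central_int_pow:
  assumes "central G z"
  shows "central G (z [^] (k::int))"
proof (rule centralI)
  fix h
  assume h: "h \<in> carrier G"
  interpret conj: group_hom G G "\<lambda>g. inv h \<otimes> g \<otimes> h"
    unfolding group_hom_def group_hom_axioms_def using conj_hom[OF h] is_group by blast
  have z: "z \<in> carrier G" using assms by (rule central_closed)
  have "inv h \<otimes> z [^] k \<otimes> h = (inv h \<otimes> z \<otimes> h) [^] k"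
    using z by (rule conj.hom_int_pow)
  also have "inv h \<otimes> z \<otimes> h = z"
    using z h assms central_commute conj_eq_iff_commute by blast
  finally show "z [^] k \<otimes> h = h \<otimes> z [^] k"
    using z h conj_eq_iff_commute by simp
qed (simp add: assms central_closed)

end

definition pow_prod :: "('a, 'b) monoid_scheme \<Rightarrow> ('i \<Rightarrow> 'a) \<Rightarrow> 'i list \<Rightarrow> ('i \<Rightarrow> int) \<Rightarrow> 'a" where
  "pow_prod G z L c = foldr (\<lambda>r acc. z r [^]\<^bsub>G\<^esub> c r \<otimes>\<^bsub>G\<^esub> acc) L \<one>\<^bsub>G\<^esub>"

lemma pow_prod_Nil [simp]: "pow_prod G z [] c = \<one>\<^bsub>G\<^esub>"
  by (simp add: pow_prod_def)

lemma pow_prod_Cons [simp]: "pow_prod G z (r # L) c = z r [^]\<^bsub>G\<^esub> c r \<otimes>\<^bsub>G\<^esub> pow_prod G z L c"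
  by (simp add: pow_prod_def)

context group
begin

lemma pow_prod_closed: "z ` set L \<subseteq> carrier G \<Longrightarrow> pow_prod G z L c \<in> carrier G"
  by (induction L) auto

lemma central_pow_prod: "(\<And>r. r \<in> set L \<Longrightarrow> central G (z r)) \<Longrightarrow> central G (pow_prod G z L c)"
  by (induction L) (auto intro: central_mult central_int_pow centralI)

lemma pow_prod_mult:
  assumes "\<And>r. r \<in> set L \<Longrightarrow> central G (z r)"
  shows "pow_prod G z L c \<otimes> pow_prod G z L d = pow_prod G z L (\<lambda>r. c r + d r)"
  using assms
proof (induction L)
  case (Cons r L)
  have z: "z r \<in> carrier G"
    using Cons.prems central_closed by simp
  have P: "central G (pow_prod G z L c)" "central G (pow_prod G z L d)"
    using Cons.prems central_pow_prod[of L z] by auto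
  have "pow_prod G z (r # L) c \<otimes> pow_prod G z (r # L) d
      = z r [^] c r \<otimes> (pow_prod G z L c \<otimes> z r [^] d r) \<otimes> pow_prod G z L d"
    using z P by (simp add: central_closed m_assoc)
  also have "\<dots> = z r [^] c r \<otimes> (z r [^] d r \<otimes> pow_prod G z L c) \<otimes> pow_prod G z L d"
    using z P(1) central_commute by (metis int_pow_closed)
  also have "\<dots> = (z r [^] c r \<otimes> z r [^] d r) \<otimes> (pow_prod G z L c \<otimes> pow_prod G z L d)"
    using z P by (simp add: central_closed m_assoc)
  finally show ?case
    using Cons z by (simp add: int_pow_mult)
qed simp

lemma pow_prod_eq_one: "(\<And>r. r \<in> set L \<Longrightarrow> c r = 0) \<Longrightarrow> pow_prod G z L c = \<one>"
  by (induction L) (auto simp: int_pow_def2)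

lemma pow_prod_inv:
  assumes "\<And>r. r \<in> set L \<Longrightarrow> central G (z r)"
  shows "inv (pow_prod G z L c) = pow_prod G z L (\<lambda>r. - c r)"
proof (rule inv_equality)
  show "pow_prod G z L (\<lambda>r. - c r) \<otimes> pow_prod G z L c = \<one>"
    using assms by (simp add: pow_prod_mult pow_prod_eq_one)
qed (use assms central_pow_prod central_closed in blast)+

lemma pow_prod_indicator:
  assumes "distinct L" "x \<in> set L" "z ` set L \<subseteq> carrier G"
  shows "pow_prod G z L (\<lambda>r. if r = x then 1 else 0) = z x"
  using assms
proof (induction L)
  case (Cons r L)
  have "pow_prod G z L (\<lambda>r. if r = x then 1 else 0) = \<one>" if "x \<notin> set L"
    using that by (intro pow_prod_eq_one) auto
  with Cons show ?case
    by (cases "r = x") (auto simp: int_pow_def2)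
qed simp

lemma normal_range_pow_prod:
  assumes "\<And>r. r \<in> set L \<Longrightarrow> central G (z r)"
  shows "range (pow_prod G z L) \<lhd> G"
proof -
  have "subgroup (range (pow_prod G z L)) G"
  proof
    show "range (pow_prod G z L) \<subseteq> carrier G"
      using assms central_pow_prod central_closed by blast
    show "\<one> \<in> range (pow_prod G z L)"
      using pow_prod_eq_one[of L "\<lambda>_. 0"] by (metis rangeI)
  qed (auto simp: assms pow_prod_mult pow_prod_inv)
  moreover have "x \<otimes> p \<otimes> inv x = p" if "x \<in> carrier G" "p \<in> range (pow_prod G z L)" for x p
  proof -
    have p: "central G p"
      using that(2) assms central_pow_prod by blast
    then have "x \<otimes> p = p \<otimes> x"
      using that(1) central_commute by metis
    then show ?thesis
      using that(1) p central_closed by (simp add: m_assoc)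
  qed
  ultimately show ?thesis
    unfolding normal_inv_iff by simp
qed

end

lemma hom_integer_group_pow_prod:
  assumes "group G" "\<psi> \<in> hom G integer_group" "z ` set L \<subseteq> carrier G"
  shows "\<psi> (pow_prod G z L c) = (\<Sum>r\<leftarrow>L. c r * \<psi> (z r))"
  using assms(3)
proof (induction L)
  case Nil
  then show ?case using assms(1,2) by (simp add: hom_one)
next
  case (Cons r L)
  interpret \<psi>: group_hom G integer_group \<psi>
    unfolding group_hom_def group_hom_axioms_def using assms(1,2) by simp
  from Cons show ?case
    by (simp add: \<psi>.hom_int_pow \<psi>.hom_mult \<psi>.G.pow_prod_closed)
qed

lemma (in group_hom) derived_subset_kernel:
  assumes "comm_group H"
  shows "derived G (carrier G) \<subseteq> kernel G H h"
proof -
  interpret C: comm_group H by (rule assms)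
  have "derived_set G (carrier G) \<subseteq> kernel G H h"
    using C.m_comm by (auto simp: kernel_def)
  then show ?thesis
    unfolding derived_def by (rule G.generate_subgroup_incl[OF _ subgroup_kernel])
qed

section \<open>The Coxeter group and its quandle\<close>

locale coxeter_system =
  fixes S :: "'s set" and m :: "'s \<Rightarrow> 's \<Rightarrow> enat"
  assumes coxeter_matrix: "coxeter_matrix S m"
begin

abbreviation "W \<equiv> coxeter_group S m"
abbreviation "gen \<equiv> pres_gen S (coxeter_rels S m)"
abbreviation "Q \<equiv> coxeter_quandle S m"
abbreviation "qop \<equiv> quandle_op S m"

lemma group_W: "group W"
  unfolding coxeter_group_def by (rule group_presented_group)

sublocale W: group W
  by (rule group_W)

lemma coxeter_rels_lists: "coxeter_rels S m \<subseteq> lists (S \<times> UNIV)"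
  unfolding coxeter_rels_def by (fastforce split: if_splits)

lemma gen_closed: "s \<in> S \<Longrightarrow> gen s \<in> carrier W"
  unfolding coxeter_group_def by (rule pres_gen_closed)

lemma gen_mult_pow_eq_one:
  assumes "s \<in> S" "t \<in> S" "m s t = enat k"
  shows "(gen s \<otimes>\<^bsub>W\<^esub> gen t) [^]\<^bsub>W\<^esub> k = \<one>\<^bsub>W\<^esub>"
proof -
  let ?r = "concat (replicate k [(s, True), (t, True)])"
  have r: "?r \<in> coxeter_rels S m"
    using assms unfolding coxeter_rels_def by blast
  then have "eval_word W gen ?r = \<one>\<^bsub>W\<^esub>"
    using pres_class_relator[OF r] pres_class_eq_eval_word coxeter_rels_lists
    by (metis coxeter_group_def subsetD)
  then show ?thesis
    using assms W.eval_word_concat_replicate[of gen s t k] gen_closed by simp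
qed

lemma gen_square: "s \<in> S \<Longrightarrow> gen s \<otimes>\<^bsub>W\<^esub> gen s = \<one>\<^bsub>W\<^esub>"
  using gen_mult_pow_eq_one[of s s 1] coxeter_matrix gen_closed
  by (simp add: coxeter_matrix_def one_enat_def)

lemma mem_Q_iff:
  "x \<in> Q \<longleftrightarrow> (\<exists>w s. x = inv\<^bsub>W\<^esub> w \<otimes>\<^bsub>W\<^esub> gen s \<otimes>\<^bsub>W\<^esub> w \<and> w \<in> carrier W \<and> s \<in> S)"
  unfolding coxeter_quandle_def by blast

lemma Q_closed: "x \<in> Q \<Longrightarrow> x \<in> carrier W"
  using gen_closed by (auto simp: mem_Q_iff)

lemma gen_in_Q: "s \<in> S \<Longrightarrow> gen s \<in> Q"
  using mem_Q_iff[of "gen s"] gen_closed by (metis W.inv_one W.l_one W.one_closed W.r_one)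

lemma Q_conj_closed:
  assumes "x \<in> Q" "w \<in> carrier W"
  shows "inv\<^bsub>W\<^esub> w \<otimes>\<^bsub>W\<^esub> x \<otimes>\<^bsub>W\<^esub> w \<in> Q"
proof -
  obtain v s where vs: "x = inv\<^bsub>W\<^esub> v \<otimes>\<^bsub>W\<^esub> gen s \<otimes>\<^bsub>W\<^esub> v" "v \<in> carrier W" "s \<in> S"
    using assms(1) mem_Q_iff by blast
  then have "inv\<^bsub>W\<^esub> w \<otimes>\<^bsub>W\<^esub> x \<otimes>\<^bsub>W\<^esub> w =
      inv\<^bsub>W\<^esub> (v \<otimes>\<^bsub>W\<^esub> w) \<otimes>\<^bsub>W\<^esub> gen s \<otimes>\<^bsub>W\<^esub> (v \<otimes>\<^bsub>W\<^esub> w)"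
    using assms(2) gen_closed by (simp add: W.m_assoc W.inv_mult_group)
  then show ?thesis
    using vs assms(2) mem_Q_iff by blast
qed

lemma Q_square:
  assumes "x \<in> Q"
  shows "x \<otimes>\<^bsub>W\<^esub> x = \<one>\<^bsub>W\<^esub>"
proof -
  obtain w s where ws: "x = inv\<^bsub>W\<^esub> w \<otimes>\<^bsub>W\<^esub> gen s \<otimes>\<^bsub>W\<^esub> w" "w \<in> carrier W" "s \<in> S"
    using assms mem_Q_iff by blast
  then have "x \<otimes>\<^bsub>W\<^esub> x = inv\<^bsub>W\<^esub> w \<otimes>\<^bsub>W\<^esub> (gen s \<otimes>\<^bsub>W\<^esub> gen s) \<otimes>\<^bsub>W\<^esub> w"
    using gen_closed by (simp add: W.m_assoc)
  then show ?thesis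
    using ws gen_square by simp
qed

lemma Q_inv: "x \<in> Q \<Longrightarrow> inv\<^bsub>W\<^esub> x = x"
  using Q_square Q_closed W.inv_equality by blast

lemma qop_eq: "qop x y = y \<otimes>\<^bsub>W\<^esub> x \<otimes>\<^bsub>W\<^esub> y"
  by (simp add: quandle_op_def)

lemma qop_in_Q: "x \<in> Q \<Longrightarrow> y \<in> Q \<Longrightarrow> qop x y \<in> Q"
  using Q_conj_closed[OF _ Q_closed] Q_inv by (metis qop_eq)

lemma qop_qop: "x \<in> Q \<Longrightarrow> y \<in> Q \<Longrightarrow> qop (qop x y) y = x"
  using Q_closed Q_square by (simp add: qop_eq W.m_assoc[symmetric]) (simp add: W.m_assoc)

end

context coxeter_system
begin

abbreviation "Ad \<equiv> adjoint_group S m"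
abbreviation "e \<equiv> pres_gen Q (adjoint_rels S m)"
abbreviation "\<phi> \<equiv> adjoint_phi S m"

lemma Ad_eq: "Ad = presented_group Q (adjoint_rels S m)"
  by (simp add: adjoint_group_def)

lemma group_Ad: "group Ad"
  unfolding Ad_eq by (rule group_presented_group)

sublocale Ad: group Ad
  by (rule group_Ad)

lemma adjoint_rels_lists: "adjoint_rels S m \<subseteq> lists (Q \<times> UNIV)"
  unfolding adjoint_rels_def using qop_in_Q by auto

lemma e_closed: "x \<in> Q \<Longrightarrow> e x \<in> carrier Ad"
  unfolding Ad_eq by (rule pres_gen_closed)

lemma adjoint_rel_eval_W:
  assumes "r \<in> adjoint_rels S m"
  shows "eval_word W (\<lambda>x. x) r = \<one>\<^bsub>W\<^esub>"
proof -
  obtain x y where r: "r = [(y, False), (x, True), (y, True), (qop x y, False)]" "x \<in> Q" "y \<in> Q"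
    using assms unfolding adjoint_rels_def by blast
  have "eval_word W (\<lambda>x. x) r = y \<otimes>\<^bsub>W\<^esub> x \<otimes>\<^bsub>W\<^esub> y \<otimes>\<^bsub>W\<^esub> inv\<^bsub>W\<^esub> (qop x y)"
    using r Q_closed Q_inv[of y] qop_in_Q by (simp add: W.m_assoc)
  also have "\<dots> = \<one>\<^bsub>W\<^esub>"
    using r(2,3) Q_closed qop_in_Q by (simp add: qop_eq[symmetric])
  finally show ?thesis .
qed

lemma \<phi>_eq_pres_lift: "\<phi> = pres_lift W (\<lambda>x. x)"
  by (simp add: fun_eq_iff adjoint_phi_def pres_lift_def)

lemma \<phi>_hom: "\<phi> \<in> hom Ad W"
  unfolding \<phi>_eq_pres_lift Ad_eq
  using Q_closed adjoint_rels_lists adjoint_rel_eval_W by (intro W.pres_lift_hom) auto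

sublocale \<phi>: group_hom Ad W \<phi>
  using \<phi>_hom by (simp add: group_hom_def group_hom_axioms_def group_Ad group_W)

lemma \<phi>_e: "x \<in> Q \<Longrightarrow> \<phi> (e x) = x"
  unfolding \<phi>_eq_pres_lift
  using Q_closed adjoint_rels_lists adjoint_rel_eval_W by (intro W.pres_lift_pres_gen) auto

lemma e_conj:
  assumes "x \<in> Q" "y \<in> Q"
  shows "inv\<^bsub>Ad\<^esub> e y \<otimes>\<^bsub>Ad\<^esub> e x \<otimes>\<^bsub>Ad\<^esub> e y = e (qop x y)"
proof -
  let ?r = "[(y, False), (x, True), (y, True), (qop x y, False)]"
  have r: "?r \<in> adjoint_rels S m"
    using assms unfolding adjoint_rels_def by blast
  moreover have "?r \<in> lists (Q \<times> UNIV)"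
    using r adjoint_rels_lists by blast
  ultimately have "eval_word Ad e ?r = \<one>\<^bsub>Ad\<^esub>"
    using pres_class_relator pres_class_eq_eval_word by (metis Ad_eq)
  then have "(inv\<^bsub>Ad\<^esub> e y \<otimes>\<^bsub>Ad\<^esub> e x \<otimes>\<^bsub>Ad\<^esub> e y) \<otimes>\<^bsub>Ad\<^esub> inv\<^bsub>Ad\<^esub> e (qop x y) = \<one>\<^bsub>Ad\<^esub>"
    using assms e_closed qop_in_Q by (simp add: Ad.m_assoc)
  then show ?thesis
    using assms e_closed qop_in_Q by (simp add: Ad.inv_solve_right')
qed

lemma e_conj_inv:
  assumes "x \<in> Q" "y \<in> Q"
  shows "e y \<otimes>\<^bsub>Ad\<^esub> e x \<otimes>\<^bsub>Ad\<^esub> inv\<^bsub>Ad\<^esub> e y = e (qop x y)"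
proof -
  have "inv\<^bsub>Ad\<^esub> e y \<otimes>\<^bsub>Ad\<^esub> e (qop x y) \<otimes>\<^bsub>Ad\<^esub> e y = e x"
    using e_conj[OF qop_in_Q[OF assms] assms(2)] qop_qop[OF assms] by simp
  then have "e y \<otimes>\<^bsub>Ad\<^esub> e x = e (qop x y) \<otimes>\<^bsub>Ad\<^esub> e y"
    using assms e_closed qop_in_Q by (simp add: Ad.m_assoc Ad.inv_solve_left')
  then show ?thesis
    using assms e_closed qop_in_Q by (simp add: Ad.inv_solve_right')
qed

lemma conj_gen_or_inv:
  assumes "x \<in> Q" "y \<in> Q" "a \<in> {e x, inv\<^bsub>Ad\<^esub> e x}"
  shows "\<phi> a = x" and "inv\<^bsub>Ad\<^esub> a \<otimes>\<^bsub>Ad\<^esub> e y \<otimes>\<^bsub>Ad\<^esub> a = e (qop y x)"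
proof -
  consider "a = e x" | "a = inv\<^bsub>Ad\<^esub> e x"
    using assms(3) by blast
  then show "\<phi> a = x" and "inv\<^bsub>Ad\<^esub> a \<otimes>\<^bsub>Ad\<^esub> e y \<otimes>\<^bsub>Ad\<^esub> a = e (qop y x)"
    using e_conj[OF assms(2,1)] e_conj_inv[OF assms(2,1)] e_closed[OF assms(1)] \<phi>_e[OF assms(1)]
      Q_inv[OF assms(1)]
    by (cases; simp)+
qed

lemma conj_e:
  assumes "g \<in> carrier Ad"
  shows "\<forall>y\<in>Q. inv\<^bsub>Ad\<^esub> g \<otimes>\<^bsub>Ad\<^esub> e y \<otimes>\<^bsub>Ad\<^esub> g = e (inv\<^bsub>W\<^esub> (\<phi> g) \<otimes>\<^bsub>W\<^esub> y \<otimes>\<^bsub>W\<^esub> \<phi> g)"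
  using assms unfolding Ad_eq
proof (induction rule: presented_group_induct)
  case one
  show ?case
    using e_closed Q_closed by (simp add: Ad_eq[symmetric])
next
  case (gen x a h)
  note x = gen(1) and a_gen = gen(2)[folded Ad_eq]
    and h = gen(3)[folded Ad_eq] and IH = gen(4)[folded Ad_eq]
  have a: "a \<in> carrier Ad"
    using a_gen e_closed[OF x] by auto
  have \<phi>_a: "\<phi> a = x"
    using conj_gen_or_inv(1)[OF x x a_gen] .
  have "inv\<^bsub>Ad\<^esub> (a \<otimes>\<^bsub>Ad\<^esub> h) \<otimes>\<^bsub>Ad\<^esub> e y \<otimes>\<^bsub>Ad\<^esub> (a \<otimes>\<^bsub>Ad\<^esub> h)
      = e (inv\<^bsub>W\<^esub> (\<phi> (a \<otimes>\<^bsub>Ad\<^esub> h)) \<otimes>\<^bsub>W\<^esub> y \<otimes>\<^bsub>W\<^esub> \<phi> (a \<otimes>\<^bsub>Ad\<^esub> h))"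
    if y: "y \<in> Q" for y
  proof -
    have "inv\<^bsub>Ad\<^esub> (a \<otimes>\<^bsub>Ad\<^esub> h) \<otimes>\<^bsub>Ad\<^esub> e y \<otimes>\<^bsub>Ad\<^esub> (a \<otimes>\<^bsub>Ad\<^esub> h)
        = inv\<^bsub>Ad\<^esub> h \<otimes>\<^bsub>Ad\<^esub> (inv\<^bsub>Ad\<^esub> a \<otimes>\<^bsub>Ad\<^esub> e y \<otimes>\<^bsub>Ad\<^esub> a) \<otimes>\<^bsub>Ad\<^esub> h"
      using a h e_closed[OF y] by (simp add: Ad.m_assoc Ad.inv_mult_group)
    also have "\<dots> = inv\<^bsub>Ad\<^esub> h \<otimes>\<^bsub>Ad\<^esub> e (qop y x) \<otimes>\<^bsub>Ad\<^esub> h"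
      using conj_gen_or_inv(2)[OF x y a_gen] by simp
    also have "\<dots> = e (inv\<^bsub>W\<^esub> (\<phi> h) \<otimes>\<^bsub>W\<^esub> qop y x \<otimes>\<^bsub>W\<^esub> \<phi> h)"
      using IH qop_in_Q[OF y x] by blast
    also have "inv\<^bsub>W\<^esub> (\<phi> h) \<otimes>\<^bsub>W\<^esub> qop y x \<otimes>\<^bsub>W\<^esub> \<phi> h
        = inv\<^bsub>W\<^esub> (\<phi> (a \<otimes>\<^bsub>Ad\<^esub> h)) \<otimes>\<^bsub>W\<^esub> y \<otimes>\<^bsub>W\<^esub> \<phi> (a \<otimes>\<^bsub>Ad\<^esub> h)"
      using a \<phi>_a h x y Q_closed Q_inv[OF x] by (simp add: qop_eq W.m_assoc W.inv_mult_group)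
    finally show ?thesis .
  qed
  then show ?case
    unfolding Ad_eq by blast
qed

lemma central_if_\<phi>_eq_one:
  assumes "g \<in> carrier Ad" "\<phi> g = \<one>\<^bsub>W\<^esub>"
  shows "central Ad g"
proof (rule Ad.centralI[OF assms(1)])
  fix h
  assume h: "h \<in> carrier Ad"
  have "inv\<^bsub>Ad\<^esub> g \<otimes>\<^bsub>Ad\<^esub> h \<otimes>\<^bsub>Ad\<^esub> g = h"
  proof (rule Ad.presented_group_hom_eqI[where h = "\<lambda>k. inv\<^bsub>Ad\<^esub> g \<otimes>\<^bsub>Ad\<^esub> k \<otimes>\<^bsub>Ad\<^esub> g"
        and h' = "\<lambda>k. k" and Xg = Q and Rl = "adjoint_rels S m"])
    show "(\<lambda>k. inv\<^bsub>Ad\<^esub> g \<otimes>\<^bsub>Ad\<^esub> k \<otimes>\<^bsub>Ad\<^esub> g) \<in> hom (presented_group Q (adjoint_rels S m)) Ad"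
      using Ad.conj_hom[OF assms(1)] by (simp only: Ad_eq)
    show "(\<lambda>k. k) \<in> hom (presented_group Q (adjoint_rels S m)) Ad"
      using iso_imp_homomorphism[OF iso_set_refl] by (simp only: Ad_eq)
    show "h \<in> carrier (presented_group Q (adjoint_rels S m))"
      using h by (simp only: Ad_eq)
    show "inv\<^bsub>Ad\<^esub> g \<otimes>\<^bsub>Ad\<^esub> e y \<otimes>\<^bsub>Ad\<^esub> g = e y" if "y \<in> Q" for y
      using conj_e[OF assms(1)] assms(2) that Q_closed by simp
  qed
  then show "g \<otimes>\<^bsub>Ad\<^esub> h = h \<otimes>\<^bsub>Ad\<^esub> g"
    using Ad.conj_eq_iff_commute[OF h assms(1)] by simp
qed

end

section \<open>Coxeter relations from the quandle structure\<close>

fun dihedral_refl :: "('a \<Rightarrow> 'a \<Rightarrow> 'a) \<Rightarrow> 'a \<Rightarrow> 'a \<Rightarrow> nat \<Rightarrow> 'a" where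
  "dihedral_refl q a b 0 = a"
| "dihedral_refl q a b (Suc 0) = q b a"
| "dihedral_refl q a b (Suc (Suc i)) = q (q (dihedral_refl q a b i) b) a"

context coxeter_system
begin

lemma dihedral_refl_in_Q: "a \<in> Q \<Longrightarrow> b \<in> Q \<Longrightarrow> dihedral_refl qop a b i \<in> Q"
  by (induction qop a b i rule: dihedral_refl.induct) (auto intro: qop_in_Q)

lemma quandle_map_dihedral_refl:
  assumes "group G" "\<And>x. x \<in> Q \<Longrightarrow> f x \<in> carrier G"
    and "\<And>x y. x \<in> Q \<Longrightarrow> y \<in> Q \<Longrightarrow> f (qop x y) = f y \<otimes>\<^bsub>G\<^esub> f x \<otimes>\<^bsub>G\<^esub> f y"
    and "a \<in> Q" "b \<in> Q"
  shows "f (dihedral_refl qop a b i) = (f a \<otimes>\<^bsub>G\<^esub> f b) [^]\<^bsub>G\<^esub> i \<otimes>\<^bsub>G\<^esub> f a"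
proof -
  interpret G: group G by (rule assms(1))
  let ?c = "f a \<otimes>\<^bsub>G\<^esub> f b"
  have fa: "f a \<in> carrier G" and fb: "f b \<in> carrier G"
    using assms(2,4,5) by auto
  show ?thesis
  proof (induction i rule: induct_nat_012)
    case 0
    then show ?case using fa by simp
  next
    case 1
    then show ?case using fa fb assms(3-5) by (simp add: G.m_assoc)
  next
    case (ge2 i)
    have "f (dihedral_refl qop a b (Suc (Suc i))) = ?c \<otimes>\<^bsub>G\<^esub> (?c [^]\<^bsub>G\<^esub> i \<otimes>\<^bsub>G\<^esub> ?c) \<otimes>\<^bsub>G\<^esub> f a"
      using ge2(1) assms(3-5) dihedral_refl_in_Q qop_in_Q fa fb by (simp add: G.m_assoc)
    also have "\<dots> = ?c [^]\<^bsub>G\<^esub> Suc (Suc i) \<otimes>\<^bsub>G\<^esub> f a"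
      using fa fb G.nat_pow_Suc2[of ?c "Suc i"] by simp
    finally show ?case .
  qed
qed

lemma coxeter_relation_of_quandle_map:
  assumes "group G" "\<And>x. x \<in> Q \<Longrightarrow> f x \<in> carrier G"
    and "\<And>x y. x \<in> Q \<Longrightarrow> y \<in> Q \<Longrightarrow> f (qop x y) = f y \<otimes>\<^bsub>G\<^esub> f x \<otimes>\<^bsub>G\<^esub> f y"
    and "s \<in> S" "t \<in> S" "m s t = enat k"
  shows "(f (gen s) \<otimes>\<^bsub>G\<^esub> f (gen t)) [^]\<^bsub>G\<^esub> k = \<one>\<^bsub>G\<^esub>"
proof -
  interpret G: group G by (rule assms(1))
  have st: "gen s \<in> Q" "gen t \<in> Q"
    using assms(4,5) gen_in_Q by auto
  \<comment> \<open>In \<open>W\<close> the \<open>k\<close>-th reflection \<open>(st)\<^sup>k s\<close> is \<open>s\<close> again; transport this along \<open>f\<close>.\<close>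
  have "dihedral_refl qop (gen s) (gen t) k = gen s"
    using quandle_map_dihedral_refl[OF group_W _ _ st, of "\<lambda>x. x" k] Q_closed gen_closed assms(4-6)
    by (simp add: qop_eq W.m_assoc gen_mult_pow_eq_one)
  then have "f (gen s) = (f (gen s) \<otimes>\<^bsub>G\<^esub> f (gen t)) [^]\<^bsub>G\<^esub> k \<otimes>\<^bsub>G\<^esub> f (gen s)"
    using quandle_map_dihedral_refl[OF assms(1-3) st, of k] by simp
  then show ?thesis
    using assms(2) st by (metis G.l_one G.m_closed G.nat_pow_closed G.one_closed G.right_cancel)
qed

end

context coxeter_system
begin

definition conj_Q :: "'s word set \<Rightarrow> 's word set \<Rightarrow> bool" where
  "conj_Q x y \<longleftrightarrow> x \<in> Q \<and> (\<exists>w\<in>carrier W. y = inv\<^bsub>W\<^esub> w \<otimes>\<^bsub>W\<^esub> x \<otimes>\<^bsub>W\<^esub> w)"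

lemma conj_Q_in_Q: "conj_Q x y \<Longrightarrow> y \<in> Q"
  unfolding conj_Q_def using Q_conj_closed by blast

lemma conj_Q_refl: "x \<in> Q \<Longrightarrow> conj_Q x x"
  unfolding conj_Q_def using Q_closed by (metis W.inv_one W.l_one W.one_closed W.r_one)

lemma conj_Q_sym:
  assumes "conj_Q x y"
  shows "conj_Q y x"
proof -
  obtain w where w: "w \<in> carrier W" "y = inv\<^bsub>W\<^esub> w \<otimes>\<^bsub>W\<^esub> x \<otimes>\<^bsub>W\<^esub> w" and x: "x \<in> Q"
    using assms conj_Q_def by auto
  then have "x = inv\<^bsub>W\<^esub> (inv\<^bsub>W\<^esub> w) \<otimes>\<^bsub>W\<^esub> y \<otimes>\<^bsub>W\<^esub> inv\<^bsub>W\<^esub> w"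
    using Q_closed by (simp add: W.m_assoc)
  then show ?thesis
    using assms conj_Q_in_Q w(1) unfolding conj_Q_def by blast
qed

lemma conj_Q_trans:
  assumes "conj_Q x y" "conj_Q y z"
  shows "conj_Q x z"
proof -
  obtain w where w: "w \<in> carrier W" "y = inv\<^bsub>W\<^esub> w \<otimes>\<^bsub>W\<^esub> x \<otimes>\<^bsub>W\<^esub> w" and x: "x \<in> Q"
    using assms(1) conj_Q_def by auto
  obtain v where v: "v \<in> carrier W" "z = inv\<^bsub>W\<^esub> v \<otimes>\<^bsub>W\<^esub> y \<otimes>\<^bsub>W\<^esub> v"
    using assms(2) conj_Q_def by auto
  have "z = inv\<^bsub>W\<^esub> (w \<otimes>\<^bsub>W\<^esub> v) \<otimes>\<^bsub>W\<^esub> x \<otimes>\<^bsub>W\<^esub> (w \<otimes>\<^bsub>W\<^esub> v)"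
    using w v x Q_closed by (simp add: W.m_assoc W.inv_mult_group)
  then show ?thesis
    using w(1) v(1) x unfolding conj_Q_def by blast
qed

lemma conj_Q_qop: "x \<in> Q \<Longrightarrow> y \<in> Q \<Longrightarrow> conj_Q x (qop x y)"
  unfolding conj_Q_def using Q_closed Q_inv by (metis qop_eq)

definition class_rep :: "'s word set \<Rightarrow> 's word set" where
  "class_rep x = (SOME r. r \<in> gen ` S \<and> conj_Q r x)"

lemma class_rep:
  assumes "x \<in> Q"
  shows "class_rep x \<in> gen ` S" and "conj_Q (class_rep x) x"
proof -
  obtain w s where "x = inv\<^bsub>W\<^esub> w \<otimes>\<^bsub>W\<^esub> gen s \<otimes>\<^bsub>W\<^esub> w" "w \<in> carrier W" "s \<in> S"
    using assms mem_Q_iff by blast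
  then have "\<exists>r. r \<in> gen ` S \<and> conj_Q r x"
    using gen_in_Q unfolding conj_Q_def by blast
  then have "class_rep x \<in> gen ` S \<and> conj_Q (class_rep x) x"
    unfolding class_rep_def by (rule someI_ex)
  then show "class_rep x \<in> gen ` S" and "conj_Q (class_rep x) x"
    by auto
qed

lemma class_rep_eq: "conj_Q x y \<Longrightarrow> class_rep x = class_rep y"
  unfolding class_rep_def by (metis conj_Q_sym conj_Q_trans)

definition class_reps :: "'s word set set" where
  "class_reps = class_rep ` Q"

lemma class_reps_in_Q: "r \<in> class_reps \<Longrightarrow> r \<in> Q"
  unfolding class_reps_def using class_rep(2) conj_Q_def by auto

lemma finite_class_reps: "finite class_reps"
proof (rule finite_subset)
  show "class_reps \<subseteq> gen ` S"
    unfolding class_reps_def using class_rep(1) by auto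
  show "finite (gen ` S)"
    using coxeter_matrix by (simp add: coxeter_matrix_def)
qed

lemma class_reps_conj_Q_iff: "r \<in> class_reps \<Longrightarrow> r' \<in> class_reps \<Longrightarrow> conj_Q r r' \<longleftrightarrow> r = r'"
  unfolding class_reps_def
  by (metis class_rep(2) class_rep_eq conj_Q_refl conj_Q_trans imageE conj_Q_def)

end

section \<open>The subgroup generated by the squares \<open>e\<^sub>x\<^sup>2\<close>\<close>

context coxeter_system
begin

lemma carrier_W: "carrier W = pres_class S (coxeter_rels S m) ` lists (S \<times> UNIV)"
  by (simp add: coxeter_group_def presented_group_carrier)

lemma \<phi>_eval_word_e_gen:
  assumes "u \<in> lists (S \<times> UNIV)"
  shows "\<phi> (eval_word Ad (e \<circ> gen) u) = pres_class S (coxeter_rels S m) u"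
proof -
  have "\<phi> (eval_word Ad (e \<circ> gen) u) = eval_word W (\<phi> \<circ> (e \<circ> gen)) u"
    using assms e_closed gen_in_Q by (intro \<phi>.hom_eval_word) auto
  also have "\<dots> = eval_word W gen u"
    using assms by (rule eval_word_cong) (simp add: \<phi>_e gen_in_Q)
  finally show ?thesis
    using pres_class_eq_eval_word[OF assms] by (simp add: coxeter_group_def)
qed

lemma \<phi>_surj: "\<phi> ` carrier Ad = carrier W"
proof
  show "carrier W \<subseteq> \<phi> ` carrier Ad"
  proof
    fix w
    assume "w \<in> carrier W"
    then obtain u where u: "u \<in> lists (S \<times> UNIV)" "w = pres_class S (coxeter_rels S m) u"
      unfolding carrier_W by blast
    moreover have "eval_word Ad (e \<circ> gen) u \<in> carrier Ad"
      using u(1) e_closed gen_in_Q by (intro Ad.eval_word_closed) auto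
    ultimately show "w \<in> \<phi> ` carrier Ad"
      using \<phi>_eval_word_e_gen by (metis image_eqI)
  qed
qed (rule \<phi>.hom_closed[THEN image_subsetI])

definition e_square :: "'s word set \<Rightarrow> 's word set word set" where
  "e_square x = e x \<otimes>\<^bsub>Ad\<^esub> e x"

lemma central_e_square: "x \<in> Q \<Longrightarrow> central Ad (e_square x)"
  unfolding e_square_def
  using central_if_\<phi>_eq_one e_closed \<phi>_e Q_square by simp

lemma e_square_conj_Q:
  assumes "conj_Q x y"
  shows "e_square x = e_square y"
proof -
  obtain w where w: "w \<in> carrier W" "y = inv\<^bsub>W\<^esub> w \<otimes>\<^bsub>W\<^esub> x \<otimes>\<^bsub>W\<^esub> w" and x: "x \<in> Q"
    using assms conj_Q_def by auto
  obtain h where h: "h \<in> carrier Ad" "\<phi> h = w"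
    using w(1) \<phi>_surj by (metis imageE)
  have "e y = inv\<^bsub>Ad\<^esub> h \<otimes>\<^bsub>Ad\<^esub> e x \<otimes>\<^bsub>Ad\<^esub> h"
    using conj_e[OF h(1)] x w h(2) by simp
  then have "e_square y = inv\<^bsub>Ad\<^esub> h \<otimes>\<^bsub>Ad\<^esub> e_square x \<otimes>\<^bsub>Ad\<^esub> h"
    unfolding e_square_def using x h(1) e_closed by (simp add: Ad.m_assoc)
  also have "\<dots> = e_square x"
    using Ad.conj_eq_iff_commute h(1) central_e_square[OF x]
    by (simp add: Ad.central_closed Ad.central_commute)
  finally show ?thesis ..
qed

definition rep_list :: "'s word set list" where
  "rep_list = (SOME L. set L = class_reps \<and> distinct L)"

lemma rep_list: "set rep_list = class_reps" "distinct rep_list"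
proof -
  have "set rep_list = class_reps \<and> distinct rep_list"
    unfolding rep_list_def using finite_distinct_list[OF finite_class_reps] by (rule someI_ex)
  then show "set rep_list = class_reps" "distinct rep_list"
    by auto
qed

text \<open>
  As the \<open>e\<^sub>x\<^sup>2\<close> are central and constant on conjugacy classes, this is the subgroup they
  generate.
\<close>

definition square_subgroup :: "'s word set word set set" where
  "square_subgroup = range (pow_prod Ad e_square rep_list)"

lemma normal_square_subgroup: "square_subgroup \<lhd> Ad"
  unfolding square_subgroup_def
  using rep_list(1) class_reps_in_Q central_e_square by (intro Ad.normal_range_pow_prod) auto

lemma e_square_in_square_subgroup:
  assumes "x \<in> Q"
  shows "e_square x \<in> square_subgroup"
proof -
  have "e_square x = e_square (class_rep x)"
    using e_square_conj_Q[OF class_rep(2)[OF assms]] by simp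
  also have "\<dots> = pow_prod Ad e_square rep_list (\<lambda>r. if r = class_rep x then 1 else 0)"
    using rep_list class_reps_in_Q central_e_square Ad.central_closed assms
    by (intro Ad.pow_prod_indicator[symmetric]) (auto simp: class_reps_def)
  finally show ?thesis
    unfolding square_subgroup_def by simp
qed

end

section \<open>The kernel of \<open>\<phi>\<close> lies in the square subgroup\<close>

context coxeter_system
begin

abbreviation "N \<equiv> square_subgroup"
abbreviation "Ad_N \<equiv> Ad Mod N"

sublocale N: normal N Ad
  by (rule normal_square_subgroup)

definition \<pi> :: "'s word set word set \<Rightarrow> 's word set word set set" where
  "\<pi> a = N #>\<^bsub>Ad\<^esub> a"

lemma \<pi>_hom: "\<pi> \<in> hom Ad Ad_N"
  unfolding \<pi>_def by (rule N.r_coset_hom_Mod)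

sublocale \<pi>: group_hom Ad Ad_N \<pi>
  by (intro group_hom.intro group_hom_axioms.intro group_Ad N.factorgroup_is_group \<pi>_hom)

lemma \<pi>_eq_one_iff: "g \<in> carrier Ad \<Longrightarrow> \<pi> g = \<one>\<^bsub>Ad_N\<^esub> \<longleftrightarrow> g \<in> N"
  unfolding \<pi>_def one_FactGroup
  using Ad.coset_join1 Ad.coset_join2 N.subgroup_axioms by blast

lemma \<pi>_e_inv:
  assumes "x \<in> Q"
  shows "inv\<^bsub>Ad_N\<^esub> \<pi> (e x) = \<pi> (e x)"
proof (rule \<pi>.H.inv_equality)
  have "\<pi> (e_square x) = \<one>\<^bsub>Ad_N\<^esub>"
    using assms \<pi>_eq_one_iff e_square_in_square_subgroup central_e_square Ad.central_closed by blast
  then show "\<pi> (e x) \<otimes>\<^bsub>Ad_N\<^esub> \<pi> (e x) = \<one>\<^bsub>Ad_N\<^esub>"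
    unfolding e_square_def using assms e_closed by simp
qed (use assms e_closed in simp_all)

lemma \<pi>_e_qop:
  assumes "x \<in> Q" "y \<in> Q"
  shows "\<pi> (e (qop x y)) = \<pi> (e y) \<otimes>\<^bsub>Ad_N\<^esub> \<pi> (e x) \<otimes>\<^bsub>Ad_N\<^esub> \<pi> (e y)"
proof -
  have "\<pi> (e (qop x y)) = \<pi> (inv\<^bsub>Ad\<^esub> e y \<otimes>\<^bsub>Ad\<^esub> e x \<otimes>\<^bsub>Ad\<^esub> e y)"
    using e_conj[OF assms] by simp
  also have "\<dots> = inv\<^bsub>Ad_N\<^esub> \<pi> (e y) \<otimes>\<^bsub>Ad_N\<^esub> \<pi> (e x) \<otimes>\<^bsub>Ad_N\<^esub> \<pi> (e y)"
    using assms e_closed by simp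
  finally show ?thesis
    using \<pi>_e_inv[OF assms(2)] by simp
qed

definition \<theta> :: "'s word set \<Rightarrow> 's word set word set set" where
  "\<theta> = pres_lift Ad_N (\<lambda>s. \<pi> (e (gen s)))"

lemma coxeter_rel_eval_Ad_N:
  assumes "r \<in> coxeter_rels S m"
  shows "eval_word Ad_N (\<lambda>s. \<pi> (e (gen s))) r = \<one>\<^bsub>Ad_N\<^esub>"
proof -
  obtain s t k where r: "r = concat (replicate k [(s, True), (t, True)])"
    and stk: "s \<in> S" "t \<in> S" "m s t = enat k"
    using assms unfolding coxeter_rels_def by blast
  have "eval_word Ad_N (\<lambda>s. \<pi> (e (gen s))) r = (\<pi> (e (gen s)) \<otimes>\<^bsub>Ad_N\<^esub> \<pi> (e (gen t))) [^]\<^bsub>Ad_N\<^esub> k"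
    unfolding r using stk gen_in_Q e_closed by (intro \<pi>.H.eval_word_concat_replicate) auto
  also have "\<dots> = \<one>\<^bsub>Ad_N\<^esub>"
    using e_closed \<pi>_e_qop stk
    by (intro coxeter_relation_of_quandle_map[where f = "\<lambda>x. \<pi> (e x)"]) simp_all
  finally show ?thesis .
qed

lemma \<theta>_pres_class:
  "u \<in> lists (S \<times> UNIV) \<Longrightarrow> \<theta> (pres_class S (coxeter_rels S m) u) = eval_word Ad_N (\<lambda>s. \<pi> (e (gen s))) u"
  unfolding \<theta>_def using coxeter_rels_lists coxeter_rel_eval_Ad_N e_closed gen_in_Q
  by (intro \<pi>.H.pres_lift_pres_class) auto

lemma \<theta>_hom: "\<theta> \<in> hom W Ad_N"
  unfolding \<theta>_def coxeter_group_def using coxeter_rels_lists coxeter_rel_eval_Ad_N e_closed gen_in_Q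
  by (intro \<pi>.H.pres_lift_hom) auto

sublocale \<theta>: group_hom W Ad_N \<theta>
  by (intro group_hom.intro group_hom_axioms.intro group_W N.factorgroup_is_group \<theta>_hom)

lemma \<theta>_\<phi>_eval_word_e_gen:
  assumes "u \<in> lists (S \<times> UNIV)"
  shows "\<theta> (\<phi> (eval_word Ad (e \<circ> gen) u)) = \<pi> (eval_word Ad (e \<circ> gen) u)"
proof -
  have "(e \<circ> gen) ` S \<subseteq> carrier Ad"
    using e_closed gen_in_Q by auto
  then have "\<pi> (eval_word Ad (e \<circ> gen) u) = eval_word Ad_N (\<pi> \<circ> (e \<circ> gen)) u"
    by (rule \<pi>.hom_eval_word[OF assms])
  then show ?thesis
    using \<phi>_eval_word_e_gen[OF assms] \<theta>_pres_class[OF assms] by (simp add: comp_def)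
qed

lemma \<theta>_Q:
  assumes "x \<in> Q"
  shows "\<theta> x = \<pi> (e x)"
proof -
  obtain w s where x: "x = inv\<^bsub>W\<^esub> w \<otimes>\<^bsub>W\<^esub> gen s \<otimes>\<^bsub>W\<^esub> w" and w: "w \<in> carrier W" and s: "s \<in> S"
    using assms mem_Q_iff by blast
  obtain u where u: "u \<in> lists (S \<times> UNIV)" "w = pres_class S (coxeter_rels S m) u"
    using w unfolding carrier_W by blast
  define h where "h = eval_word Ad (e \<circ> gen) u"
  have h: "h \<in> carrier Ad"
    unfolding h_def using u(1) e_closed gen_in_Q by (intro Ad.eval_word_closed) auto
  have \<phi>_h: "\<phi> h = w"
    unfolding h_def using \<phi>_eval_word_e_gen[OF u(1)] u(2) by simp
  have \<theta>_w: "\<theta> w = \<pi> h"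
    using \<theta>_\<phi>_eval_word_e_gen[OF u(1)] \<phi>_h by (simp add: h_def)
  have \<theta>_gen: "\<theta> (gen s) = \<pi> (e (gen s))"
    unfolding \<theta>_def using s coxeter_rels_lists coxeter_rel_eval_Ad_N e_closed gen_in_Q
    by (intro \<pi>.H.pres_lift_pres_gen) auto
  have "\<theta> x = inv\<^bsub>Ad_N\<^esub> \<theta> w \<otimes>\<^bsub>Ad_N\<^esub> \<theta> (gen s) \<otimes>\<^bsub>Ad_N\<^esub> \<theta> w"
    using x w s gen_closed by simp
  also have "\<dots> = \<pi> (inv\<^bsub>Ad\<^esub> h \<otimes>\<^bsub>Ad\<^esub> e (gen s) \<otimes>\<^bsub>Ad\<^esub> h)"
    using \<theta>_w \<theta>_gen h s e_closed gen_in_Q by simp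
  also have "inv\<^bsub>Ad\<^esub> h \<otimes>\<^bsub>Ad\<^esub> e (gen s) \<otimes>\<^bsub>Ad\<^esub> h = e x"
    using conj_e[OF h] s gen_in_Q x \<phi>_h by simp
  finally show ?thesis .
qed

lemma \<theta>_\<phi>:
  assumes "g \<in> carrier Ad"
  shows "\<theta> (\<phi> g) = \<pi> g"
proof (rule \<pi>.H.presented_group_hom_eqI[where h = "\<lambda>g. \<theta> (\<phi> g)" and h' = \<pi>
      and Xg = Q and Rl = "adjoint_rels S m"])
  show "(\<lambda>g. \<theta> (\<phi> g)) \<in> hom (presented_group Q (adjoint_rels S m)) Ad_N"
    using hom_compose[OF \<phi>_hom \<theta>_hom] by (simp add: comp_def Ad_eq)
  show "\<pi> \<in> hom (presented_group Q (adjoint_rels S m)) Ad_N"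
    using \<pi>_hom by (simp only: Ad_eq)
  show "g \<in> carrier (presented_group Q (adjoint_rels S m))"
    using assms by (simp only: Ad_eq)
  show "\<theta> (\<phi> (e x)) = \<pi> (e x)" if "x \<in> Q" for x
    using that \<theta>_Q \<phi>_e by simp
qed

lemma kernel_\<phi>_subset: "g \<in> carrier Ad \<Longrightarrow> \<phi> g = \<one>\<^bsub>W\<^esub> \<Longrightarrow> g \<in> N"
  using \<theta>_\<phi> \<pi>_eq_one_iff by fastforce

end

section \<open>Counting letters in a conjugacy class\<close>

context coxeter_system
begin

definition class_count :: "'s word set \<Rightarrow> 's word set word set \<Rightarrow> int" where
  "class_count r = pres_lift integer_group (\<lambda>x. if conj_Q x r then 1 else 0)"

lemma class_count_rel:
  assumes "rel \<in> adjoint_rels S m"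
  shows "eval_word integer_group (\<lambda>x. if conj_Q x r then 1 else 0) rel = \<one>\<^bsub>integer_group\<^esub>"
proof -
  obtain x y where rel: "rel = [(y, False), (x, True), (y, True), (qop x y, False)]" "x \<in> Q" "y \<in> Q"
    using assms unfolding adjoint_rels_def by blast
  have "conj_Q (qop x y) r \<longleftrightarrow> conj_Q x r"
    using conj_Q_qop[OF rel(2,3)] conj_Q_trans conj_Q_sym by blast
  then show ?thesis
    using rel by simp
qed

lemma class_count_hom: "class_count r \<in> hom Ad integer_group"
  unfolding class_count_def Ad_eq using adjoint_rels_lists class_count_rel
  by (intro group.pres_lift_hom[OF group_integer_group]) auto

lemma class_count_e: "x \<in> Q \<Longrightarrow> class_count r (e x) = (if conj_Q x r then 1 else 0)"
  unfolding class_count_def using adjoint_rels_lists class_count_rel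
  by (intro group.pres_lift_pres_gen[OF group_integer_group]) auto

lemma class_count_square_subgroup:
  assumes "r \<in> class_reps"
  shows "class_count r (pow_prod Ad e_square rep_list c) = 2 * c r"
proof -
  have sq: "class_count r (e_square x) = (if conj_Q x r then 2 else 0)" if "x \<in> Q" for x
    using hom_mult[OF class_count_hom e_closed[OF that] e_closed[OF that]] class_count_e[OF that]
    by (simp add: e_square_def)
  have "class_count r (pow_prod Ad e_square rep_list c) = (\<Sum>r'\<leftarrow>rep_list. c r' * class_count r (e_square r'))"
    using rep_list(1) class_reps_in_Q central_e_square Ad.central_closed
    by (intro hom_integer_group_pow_prod[OF group_Ad class_count_hom]) auto
  also have "\<dots> = (\<Sum>r'\<in>class_reps. if r' = r then 2 * c r' else 0)"
    using rep_list class_reps_in_Q class_reps_conj_Q_iff[OF _ assms] sq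
    by (simp add: sum_list_distinct_conv_sum_set cong: sum.cong) (rule sum.cong; simp)
  also have "\<dots> = 2 * c r"
    using assms finite_class_reps by simp
  finally show ?thesis .
qed

lemma class_count_derived:
  assumes "g \<in> derived Ad (carrier Ad)"
  shows "class_count r g = 0"
proof -
  interpret \<kappa>: group_hom Ad integer_group "class_count r"
    by (intro group_hom.intro group_hom_axioms.intro group_Ad group_integer_group class_count_hom)
  show ?thesis
    using \<kappa>.derived_subset_kernel[OF abelian_integer_group] assms by (auto simp: kernel_def)
qed

lemma derived_inter_kernel_\<phi>:
  assumes "g \<in> derived Ad (carrier Ad)" "\<phi> g = \<one>\<^bsub>W\<^esub>"
  shows "g = \<one>\<^bsub>Ad\<^esub>"
proof -
  have "g \<in> carrier Ad"
    using assms(1) Ad.derived_in_carrier[of "carrier Ad"] by blast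
  then obtain c where c: "g = pow_prod Ad e_square rep_list c"
    using kernel_\<phi>_subset assms(2) unfolding square_subgroup_def by blast
  have "c r = 0" if "r \<in> set rep_list" for r
  proof -
    have "2 * c r = class_count r g"
      using class_count_square_subgroup[of r c] that rep_list(1) c by simp
    then show ?thesis
      using class_count_derived[OF assms(1)] by simp
  qed
  then show ?thesis
    unfolding c by (rule Ad.pow_prod_eq_one)
qed

end

context coxeter_system
begin

lemma \<phi>_derived: "\<phi> ` derived Ad (carrier Ad) = derived W (carrier W)"
  using \<phi>.derived_img[of "carrier Ad"] \<phi>_surj by simp

lemma \<phi>_iso_derived:
  "\<phi> \<in> iso (Ad\<lparr>carrier := derived Ad (carrier Ad)\<rparr>) (W\<lparr>carrier := derived W (carrier W)\<rparr>)"
proof -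
  have sub: "subgroup (derived Ad (carrier Ad)) Ad"
    by (rule Ad.derived_is_subgroup) simp
  interpret \<phi>': group_hom "Ad\<lparr>carrier := derived Ad (carrier Ad)\<rparr>" W \<phi>
    by (rule \<phi>.induced_group_hom'[OF sub])
  have "inj_on \<phi> (derived Ad (carrier Ad))"
    using \<phi>'.inj_on_one_iff derived_inter_kernel_\<phi> by simp
  moreover have "\<phi> \<in> hom (Ad\<lparr>carrier := derived Ad (carrier Ad)\<rparr>) (W\<lparr>carrier := derived W (carrier W)\<rparr>)"
    using \<phi>'.homh \<phi>_derived by (auto simp: hom_def)
  ultimately show ?thesis
    using \<phi>_derived by (simp add: iso_def bij_betw_def)
qed

end

theorem theorem5p1:
  fixes S :: "'s set" and m :: "'s \<Rightarrow> 's \<Rightarrow> enat"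
  assumes "coxeter_matrix S m"
  shows "adjoint_phi S m \<in> hom (adjoint_group S m) (coxeter_group S m)
    \<and> adjoint_phi S m \<in> iso
        ((adjoint_group S m)\<lparr>carrier := derived (adjoint_group S m) (carrier (adjoint_group S m))\<rparr>)
        ((coxeter_group S m)\<lparr>carrier := derived (coxeter_group S m) (carrier (coxeter_group S m))\<rparr>)"
proof -
  interpret coxeter_system S m
    by (rule coxeter_system.intro[OF assms])
  show ?thesis
    using \<phi>_hom \<phi>_iso_derived by blast
qed

end
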